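(* Let $A$ be an infinite set, fix $z\in A$, $A'=A\setminus\{z\}$, and $p\in[1,\infty)$. Let $\alpha^n=a_1^na_2^n\ldots\in N(A)$ for $n\in\mathbb{N}^*$ and $x_n=p_p(\alpha^n)$. Suppose there are $n_0\in\mathbb{N}^*$, $n_0\ge 2$, and $a,b\in A$ with $a\neq b$ such that $\alpha=a_1a_2\ldots a_{n_0-1}abbb\ldots\in N(A)$ (i.e. the $n_0$-th letter is $a$ and all later letters are $b$), and let $x=p_p(\alpha)$. If $\lim_{n\to\infty}\|x_n-x\|_p=0$, then for every $m\in\mathbb{N}^*$ with $m>n_0+1$ there exists $l_m\in\mathbb{N}^*$ such that for every $l\ge l_m$ one of the following holds: (i) $a_i^l=a_i$ for $i=1,\ldots,n_0-1$, $a_{n_0}^l=a$, and $a_{n_0+1}^l=\cdots=a_m^l=b$; (ii) $a_i^l=a_i$ for $i=1,\ldots,n_0-1$, $a_{n_0}^l=b$, and $a_{n_0+1}^l=\cdots=a_m^l=a$.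
   Context: $l^p(A)$ is the set of families $x=(x_a)_{a\in A'}$ of real numbers with $x_a=0$ for all but countably many $a$ and $\sum_a|x_a|^p<\infty$, with norm $\|x\|_p=(\sum_a|x_a|^p)^{1/p}$. $N(A)$ is the set of all sequences $\alpha=a_1a_2a_3\ldots$ with $a_k\in A$. The map $p_p:N(A)\to l^p(A)$ is $p_p(\alpha)=(\alpha_c)_{c\in A'}$ where, for $\alpha=a_1a_2\ldots$, $\alpha_c=\sum_{k:\,a_k=c}2^{-k}$ (and $\alpha_c=0$ if no $a_k$ equals $c$). *)

theory Defs
  imports "HOL-Analysis.Analysis"
begin

text \<open>Words in N(A) are represented as functions nat \<Rightarrow> 'a, letters at positions 1,2,3,...
  (position 0 unused). A word alpha lies in N(A) iff alpha k \<in> A for all k \<ge> 1.\<close>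

definition inN :: "'a set \<Rightarrow> (nat \<Rightarrow> 'a) \<Rightarrow> bool" where
  "inN A \<alpha> \<longleftrightarrow> (\<forall>k\<ge>1. \<alpha> k \<in> A)"

definition pp :: "'a set \<Rightarrow> 'a \<Rightarrow> (nat \<Rightarrow> 'a) \<Rightarrow> 'a \<Rightarrow> real" where
  "pp A z \<alpha> = (\<lambda>c. if c \<in> A - {z}
       then (\<Sum>k. if \<alpha> (Suc k) = c then (1/2) ^ Suc k else 0) else 0)"

definition lp_norm :: "real \<Rightarrow> 'a set \<Rightarrow> ('a \<Rightarrow> real) \<Rightarrow> real" where
  "lp_norm p I x = (infsum (\<lambda>c. \<bar>x c\<bar> powr p) I) powr (1 / p)"

end

theory Submission
  imports Defs
begin

text \<open>Coordinate c of p_p(beta) is the binary expansion, sum of 2^-k over the positions k with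
  beta_k = c. Once these coordinates of alpha^l and alpha agree up to 2^-(m+2), the two words agree
  at all positions up to m except for the ambiguity 0.1000... = 0.0111...: at the first mismatch i,
  a letter e other than z sitting at i in one word fills positions i+1..m+1 of the other word and
  is absent there from the first. As alpha is constant after n0, this can only happen at i = n0,
  and then the words swap a and b. The letter z, which has no coordinate, is recovered as the only
  letter left over.\<close>

definition occ_weight :: "(nat \<Rightarrow> 'a) \<Rightarrow> 'a \<Rightarrow> nat \<Rightarrow> real" where
  "occ_weight \<beta> e k = (if \<beta> k = e then (1/2)^k else 0)"

definition tail_weight :: "(nat \<Rightarrow> 'a) \<Rightarrow> 'a \<Rightarrow> nat \<Rightarrow> real" where
  "tail_weight \<beta> e i = (\<Sum>n. occ_weight \<beta> e (n + i))"

lemma geometric_tail_sums: "(\<lambda>n. (1/2::real)^(n + i)) sums (2 * (1/2)^i)"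
proof -
  have "(\<lambda>n. (1/2::real)^i * (1/2)^n) sums ((1/2)^i * (1 / (1 - 1/2)))"
    by (intro sums_mult geometric_sums) auto
  then show ?thesis by (simp add: power_add mult.commute)
qed

lemma summable_occ_weight: "summable (\<lambda>n. occ_weight \<beta> e (n + i))"
  by (rule summable_comparison_test[OF _ sums_summable[OF geometric_tail_sums[of i]]])
     (auto simp: occ_weight_def)

lemma tail_weight_nonneg: "0 \<le> tail_weight \<beta> e i"
  unfolding tail_weight_def occ_weight_def
  by (intro suminf_nonneg) (use summable_occ_weight[unfolded occ_weight_def] in auto)

lemma tail_weight_le: "tail_weight \<beta> e i \<le> 2 * (1/2)^i"
  unfolding tail_weight_def
  by (rule sums_le[OF _ summable_sums[OF summable_occ_weight] geometric_tail_sums])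
     (simp add: occ_weight_def)

lemma tail_weight_Suc: "tail_weight \<beta> e i = occ_weight \<beta> e i + tail_weight \<beta> e (Suc i)"
  using suminf_split_head[OF summable_occ_weight[of \<beta> e i]]
  by (simp add: tail_weight_def add.commute)

lemma tail_weight_ge_occurrence:
  assumes "i \<le> k" "\<beta> k = e"
  shows "(1/2)^k \<le> tail_weight \<beta> e i"
proof -
  have single: "(\<lambda>n. if n = k - i then occ_weight \<beta> e (n + i) else 0)
      sums occ_weight \<beta> e (k - i + i)"
    by (rule sums_single)
  have "occ_weight \<beta> e (k - i + i) \<le> tail_weight \<beta> e i"
    unfolding tail_weight_def
    by (rule sums_le[OF _ single summable_sums[OF summable_occ_weight]])
       (simp add: occ_weight_def)
  then show ?thesis using assms by (simp add: occ_weight_def)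
qed

lemma tail_weight_le_miss:
  assumes "i \<le> k" "\<beta> k \<noteq> e"
  shows "tail_weight \<beta> e i \<le> 2 * (1/2)^i - (1/2)^k"
proof -
  have "(\<lambda>n. if n = k - i then (1/2::real)^(n + i) else 0) sums (1/2)^(k - i + i)"
    by (rule sums_single[of _ "\<lambda>n. (1/2::real)^(n + i)", simplified])
  then have sum: "(\<lambda>n. occ_weight \<beta> e (n + i) + (if n = k - i then (1/2)^(n + i) else 0))
      sums (tail_weight \<beta> e i + (1/2)^(k - i + i))"
    unfolding tail_weight_def by (intro sums_add summable_sums[OF summable_occ_weight])
  have "tail_weight \<beta> e i + (1/2)^(k - i + i) \<le> 2 * (1/2)^i"
    by (rule sums_le[OF _ sum geometric_tail_sums]) (use assms in \<open>auto simp: occ_weight_def\<close>)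
  then show ?thesis using assms by simp
qed

lemma tail_weight_split:
  "j \<le> i \<Longrightarrow> tail_weight \<beta> e j = (\<Sum>k\<in>{j..<i}. occ_weight \<beta> e k) + tail_weight \<beta> e i"
proof (induction i)
  case (Suc i)
  then show ?case
    using tail_weight_Suc[of \<beta> e i] by (cases "j = Suc i") (auto simp: le_Suc_eq)
qed simp

lemma tail_weight_skip:
  "\<forall>k\<in>{i..<N}. \<beta> k \<noteq> e \<Longrightarrow> i \<le> N \<Longrightarrow> tail_weight \<beta> e i = tail_weight \<beta> e N"
  using tail_weight_split[of i N \<beta> e] by (simp add: occ_weight_def)

lemma tail_weight_diff_common_prefix:
  assumes "\<forall>j\<in>{1..<i}. \<beta> j = \<gamma> j" "1 \<le> i"
  shows "tail_weight \<beta> e 1 - tail_weight \<gamma> e 1 = tail_weight \<beta> e i - tail_weight \<gamma> e i"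
proof -
  have "(\<Sum>k\<in>{1..<i}. occ_weight \<beta> e k) = (\<Sum>k\<in>{1..<i}. occ_weight \<gamma> e k)"
    using assms(1) by (intro sum.cong) (auto simp: occ_weight_def)
  then show ?thesis
    using tail_weight_split[of 1 i \<beta> e] tail_weight_split[of 1 i \<gamma> e] assms(2) by simp
qed

lemma tail_weight_close_switch:
  assumes close: "\<bar>tail_weight \<gamma> e i - tail_weight \<delta> e i\<bar> < (1/2)^(m+2)"
    and "\<gamma> i = e" "\<delta> i \<noteq> e" and k: "i < k" "k \<le> m + 1"
  shows "\<delta> k = e \<and> \<gamma> k \<noteq> e"
proof -
  have half: "2 * (1/2::real)^(Suc i) = (1/2)^i"
    by simp
  have \<gamma>: "tail_weight \<gamma> e i = (1/2)^i + tail_weight \<gamma> e (Suc i)"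
    using tail_weight_Suc[of \<gamma> e i] assms(2) by (simp add: occ_weight_def)
  have \<delta>: "tail_weight \<delta> e i = tail_weight \<delta> e (Suc i)"
    using tail_weight_Suc[of \<delta> e i] assms(3) by (simp add: occ_weight_def)
  have small: "2 * (1/2::real)^(m+2) \<le> (1/2)^k"
    using power_decreasing[of k "m+1" "1/2::real"] k by simp
  have "\<delta> k = e"
  proof (rule ccontr)
    assume "\<delta> k \<noteq> e"
    then have "tail_weight \<delta> e (Suc i) \<le> 2 * (1/2)^(Suc i) - (1/2)^k"
      using tail_weight_le_miss[of "Suc i" k] k by simp
    then show False
      using close \<gamma> \<delta> half small tail_weight_nonneg[of \<gamma> e "Suc i"] by linarith
  qed
  moreover have "\<gamma> k \<noteq> e"
  proof
    assume "\<gamma> k = e"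
    then have "(1/2)^k \<le> tail_weight \<gamma> e (Suc i)"
      using k by (intro tail_weight_ge_occurrence) auto
    then show False
      using close \<gamma> \<delta> half small tail_weight_le[of \<delta> e "Suc i"] by linarith
  qed
  ultimately show ?thesis ..
qed

lemma tail_weight_close_avoid:
  assumes close: "\<bar>tail_weight \<beta> e i - tail_weight \<gamma> e i\<bar> < (1/2)^(m+2)"
    and avoid: "\<forall>j\<in>{i..m+1}. \<beta> j \<noteq> e" and k: "i \<le> k" "k \<le> m"
  shows "\<gamma> k \<noteq> e"
proof
  assume "\<gamma> k = e"
  then have "(1/2)^k \<le> tail_weight \<gamma> e i"
    using k by (intro tail_weight_ge_occurrence) auto
  moreover have "4 * (1/2::real)^(m+2) \<le> (1/2)^k"
    using power_decreasing[of k m "1/2::real"] k by simp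
  moreover have "tail_weight \<beta> e i = tail_weight \<beta> e (m+2)"
    using avoid k by (intro tail_weight_skip) auto
  ultimately show False
    using close tail_weight_le[of \<beta> e "m+2"] by linarith
qed

context
  fixes A :: "'a set" and z a b :: 'a and \<alpha> \<beta> :: "nat \<Rightarrow> 'a" and n0 m :: nat
  assumes in_A: "inN A \<alpha>" "inN A \<beta>"
    and \<alpha>_n0: "\<alpha> n0 = a" and \<alpha>_tail: "\<forall>k>n0. \<alpha> k = b" and "a \<noteq> b"
    and n0: "1 \<le> n0" and m: "n0 + 1 < m"
begin

lemma change_point_eq_n0:
  assumes "\<forall>k\<in>{i<..m}. \<alpha> k = e" "\<alpha> (Suc i) \<noteq> \<alpha> i"
  shows "i = n0"
proof (rule linorder_cases[of i n0])
  assume "i < n0"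
  then have "\<alpha> n0 = e" "\<alpha> (Suc n0) = e"
    using assms(1) m by auto
  then show ?thesis
    using \<alpha>_n0 \<alpha>_tail \<open>a \<noteq> b\<close> by simp
next
  assume "n0 < i"
  then show ?thesis using assms(2) \<alpha>_tail by simp
qed

lemma first_mismatch_eq_n0:
  assumes close: "\<forall>e\<in>A - {z}. \<bar>tail_weight \<beta> e i - tail_weight \<alpha> e i\<bar> < (1/2)^(m+2)"
    and i: "1 \<le> i" "i \<le> m" and mismatch: "\<beta> i \<noteq> \<alpha> i"
  shows "i = n0 \<and> \<beta> i = b"
proof (cases "\<beta> i = z")
  case False
  then have "\<beta> i \<in> A - {z}"
    using in_A i by (auto simp: inN_def)
  with close have close_\<beta>: "\<bar>tail_weight \<beta> (\<beta> i) i - tail_weight \<alpha> (\<beta> i) i\<bar> < (1/2)^(m+2)"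
    by blast
  have \<alpha>_after: "\<alpha> k = \<beta> i" if "i < k" "k \<le> m + 1" for k
    using tail_weight_close_switch[OF close_\<beta> refl mismatch[symmetric] that] by blast
  then have "i = n0"
    using change_point_eq_n0[of i "\<beta> i"] mismatch i by auto
  then show ?thesis
    using \<alpha>_after[of "Suc n0"] \<alpha>_tail m by auto
next
  case True
  then have "\<alpha> i \<in> A - {z}"
    using in_A i mismatch by (auto simp: inN_def)
  with close have close_\<alpha>: "\<bar>tail_weight \<alpha> (\<alpha> i) i - tail_weight \<beta> (\<alpha> i) i\<bar> < (1/2)^(m+2)"
    by (auto simp: abs_minus_commute)
  have switch: "\<beta> k = \<alpha> i \<and> \<alpha> k \<noteq> \<alpha> i" if "i < k" "k \<le> m + 1" for k
    using tail_weight_close_switch[OF close_\<alpha> refl mismatch that] .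
  have \<alpha>_z: "\<alpha> k = z" if k: "i < k" "k \<le> m" for k
  proof (rule ccontr)
    assume "\<alpha> k \<noteq> z"
    then have e: "\<alpha> k \<in> A - {z}"
      using in_A k i by (auto simp: inN_def)
    have avoid: "\<forall>j\<in>{i..m+1}. \<beta> j \<noteq> \<alpha> k"
    proof
      fix j assume j: "j \<in> {i..m+1}"
      show "\<beta> j \<noteq> \<alpha> k"
      proof (cases "j = i")
        case True
        then show ?thesis using \<open>\<beta> i = z\<close> e by auto
      next
        case False
        then show ?thesis using switch[of j] switch[of k] j k by auto
      qed
    qed
    have "\<bar>tail_weight \<beta> (\<alpha> k) i - tail_weight \<alpha> (\<alpha> k) i\<bar> < (1/2)^(m+2)"
      using close e by blast
    from tail_weight_close_avoid[OF this avoid, of k] k show False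
      by simp
  qed
  have "i = n0"
    by (rule change_point_eq_n0[of i z]) (use \<alpha>_z switch[of "Suc i"] i in simp_all)
  then show ?thesis
    using \<alpha>_z[of "Suc n0"] \<alpha>_tail True m by simp
qed

lemma swapped_tail_after_n0:
  assumes close: "\<forall>e\<in>A - {z}. \<bar>tail_weight \<beta> e n0 - tail_weight \<alpha> e n0\<bar> < (1/2)^(m+2)"
    and \<beta>_n0: "\<beta> n0 = b" and k: "n0 < k" "k \<le> m"
  shows "\<beta> k = a"
proof (cases "a = z")
  case False
  then have "a \<in> A - {z}"
    using in_A \<alpha>_n0 n0 by (auto simp: inN_def)
  with close have "\<bar>tail_weight \<alpha> a n0 - tail_weight \<beta> a n0\<bar> < (1/2)^(m+2)"
    by (auto simp: abs_minus_commute)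
  from tail_weight_close_switch[OF this \<alpha>_n0, of k] \<beta>_n0 \<open>a \<noteq> b\<close> k show ?thesis
    by auto
next
  case True
  have "b \<in> A - {z}"
    using in_A \<alpha>_tail[rule_format, of "Suc n0"] \<open>a \<noteq> b\<close> True by (auto simp: inN_def)
  with close have "\<bar>tail_weight \<beta> b n0 - tail_weight \<alpha> b n0\<bar> < (1/2)^(m+2)"
    by blast
  from tail_weight_close_switch[OF this \<beta>_n0, of k] \<alpha>_n0 \<open>a \<noteq> b\<close> k
  have not_b: "\<beta> k \<noteq> b"
    by auto
  show ?thesis
  proof (rule ccontr)
    assume "\<beta> k \<noteq> a"
    then have e: "\<beta> k \<in> A - {z}"
      using in_A k True by (auto simp: inN_def)
    have avoid: "\<forall>j\<in>{n0..m+1}. \<alpha> j \<noteq> \<beta> k"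
      using \<alpha>_n0 \<alpha>_tail True e not_b by (auto simp: le_less)
    have "\<bar>tail_weight \<alpha> (\<beta> k) n0 - tail_weight \<beta> (\<beta> k) n0\<bar> < (1/2)^(m+2)"
      using close e by (auto simp: abs_minus_commute)
    from tail_weight_close_avoid[OF this avoid, of k] k show False
      by simp
  qed
qed

lemma close_tail_weights_agree_or_swap:
  assumes close: "\<forall>e\<in>A - {z}. \<bar>tail_weight \<beta> e 1 - tail_weight \<alpha> e 1\<bar> < (1/2)^(m+2)"
  shows "((\<forall>i\<in>{1..<n0}. \<beta> i = \<alpha> i) \<and> \<beta> n0 = a \<and> (\<forall>i\<in>{n0<..m}. \<beta> i = b))
    \<or> ((\<forall>i\<in>{1..<n0}. \<beta> i = \<alpha> i) \<and> \<beta> n0 = b \<and> (\<forall>i\<in>{n0<..m}. \<beta> i = a))"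
proof (cases "\<forall>j\<in>{1..m}. \<beta> j = \<alpha> j")
  case True
  then show ?thesis using \<alpha>_n0 \<alpha>_tail n0 m by (auto simp: Ball_def)
next
  case False
  then obtain i where i: "1 \<le> i" "i \<le> m" "\<beta> i \<noteq> \<alpha> i"
    and prefix: "\<forall>j\<in>{1..<i}. \<beta> j = \<alpha> j"
    using exists_least_iff[of "\<lambda>j. 1 \<le> j \<and> j \<le> m \<and> \<beta> j \<noteq> \<alpha> j"]
    by (metis atLeastAtMost_iff atLeastLessThan_iff less_imp_le_nat order.strict_trans2)
  have close_i: "\<forall>e\<in>A - {z}. \<bar>tail_weight \<beta> e i - tail_weight \<alpha> e i\<bar> < (1/2)^(m+2)"
    using close tail_weight_diff_common_prefix[OF prefix i(1)] by metis
  with i have "i = n0" "\<beta> n0 = b"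
    using first_mismatch_eq_n0 by auto
  with close_i have "\<forall>k\<in>{n0<..m}. \<beta> k = a"
    using swapped_tail_after_n0 by simp
  with prefix \<open>i = n0\<close> \<open>\<beta> n0 = b\<close> show ?thesis
    by simp
qed

end

lemma pp_eq_tail_weight: "c \<in> A - {z} \<Longrightarrow> pp A z \<beta> c = tail_weight \<beta> c 1"
  unfolding pp_def tail_weight_def occ_weight_def Suc_eq_plus1 by simp

lemma sum_tail_weight_le_1:
  assumes "finite F"
  shows "(\<Sum>c\<in>F. tail_weight \<beta> c 1) \<le> 1"
proof -
  have "(\<Sum>c\<in>F. tail_weight \<beta> c 1) = (\<Sum>n. \<Sum>c\<in>F. occ_weight \<beta> c (n + 1))"
    unfolding tail_weight_def by (rule suminf_sum[symmetric]) (rule summable_occ_weight)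
  also have "\<dots> \<le> (\<Sum>n. (1/2::real)^(n + 1))"
  proof (rule suminf_le)
    show "(\<Sum>c\<in>F. occ_weight \<beta> c (n + 1)) \<le> (1/2)^(n + 1)" for n
      using assms by (simp add: occ_weight_def sum.delta)
    show "summable (\<lambda>n. \<Sum>c\<in>F. occ_weight \<beta> c (n + 1))"
      by (intro summable_sum summable_occ_weight)
  qed (rule sums_summable[OF geometric_tail_sums])
  also have "\<dots> = 1" using sums_unique[OF geometric_tail_sums[of 1]] by simp
  finally show ?thesis .
qed

lemma tail_weight_summable_on: "(\<lambda>c. tail_weight \<beta> c 1) summable_on B"
proof (rule nonneg_bdd_above_summable_on)
  show "bdd_above (sum (\<lambda>c. tail_weight \<beta> c 1) ` {F. F \<subseteq> B \<and> finite F})"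
    unfolding bdd_above_def using sum_tail_weight_le_1 by blast
qed (simp add: tail_weight_nonneg)

lemma pp_diff_powr_summable_on:
  assumes "p \<ge> 1"
  shows "(\<lambda>c. \<bar>pp A z \<beta> c - pp A z \<gamma> c\<bar> powr p) summable_on (A - {z})"
proof (rule summable_on_comparison_test[OF summable_on_add[OF tail_weight_summable_on
      tail_weight_summable_on]])
  fix c assume c: "c \<in> A - {z}"
  define d where "d = \<bar>pp A z \<beta> c - pp A z \<gamma> c\<bar>"
  have bounds: "0 \<le> tail_weight \<beta> c 1" "tail_weight \<beta> c 1 \<le> 1"
    "0 \<le> tail_weight \<gamma> c 1" "tail_weight \<gamma> c 1 \<le> 1"
    using tail_weight_nonneg tail_weight_le[of _ c 1] by auto
  then have "d \<le> 1" using c by (simp add: d_def pp_eq_tail_weight)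
  then have "d powr p \<le> d powr 1"
    by (intro powr_mono') (use assms in \<open>auto simp: d_def\<close>)
  also have "\<dots> = d"
    by (simp add: d_def)
  also have "\<dots> \<le> tail_weight \<beta> c 1 + tail_weight \<gamma> c 1"
    using bounds c by (simp add: d_def pp_eq_tail_weight)
  finally show "\<bar>pp A z \<beta> c - pp A z \<gamma> c\<bar> powr p \<le> tail_weight \<beta> c 1 + tail_weight \<gamma> c 1"
    by (simp add: d_def)
qed simp

lemma abs_le_lp_norm:
  assumes "p > 0" and summable: "(\<lambda>c. \<bar>x c\<bar> powr p) summable_on I" and "c \<in> I"
  shows "\<bar>x c\<bar> \<le> lp_norm p I x"
proof -
  have "infsum (\<lambda>c. \<bar>x c\<bar> powr p) {c} \<le> infsum (\<lambda>c. \<bar>x c\<bar> powr p) I"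
    by (rule infsum_mono2) (use summable \<open>c \<in> I\<close> in auto)
  then have "(\<bar>x c\<bar> powr p) powr (1/p) \<le> (infsum (\<lambda>c. \<bar>x c\<bar> powr p) I) powr (1/p)"
    using \<open>p > 0\<close> by (intro powr_mono2) auto
  then show ?thesis using \<open>p > 0\<close> by (simp add: lp_norm_def powr_powr)
qed

lemma tail_weight_close_of_lp_norm_less:
  assumes "p \<ge> 1" and "lp_norm p (A - {z}) (\<lambda>c. pp A z \<beta> c - pp A z \<gamma> c) < \<epsilon>"
    and e: "e \<in> A - {z}"
  shows "\<bar>tail_weight \<beta> e 1 - tail_weight \<gamma> e 1\<bar> < \<epsilon>"
proof -
  have "p > 0"
    using \<open>p \<ge> 1\<close> by simp
  have "\<bar>pp A z \<beta> e - pp A z \<gamma> e\<bar> < \<epsilon>"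
    using abs_le_lp_norm[OF \<open>p > 0\<close> pp_diff_powr_summable_on[OF \<open>p \<ge> 1\<close>] e] assms(2)
    by (rule order.strict_trans1)
  then show ?thesis
    by (simp add: pp_eq_tail_weight[OF e])
qed

theorem proposition3p4:
  fixes A :: "'a set" and z a b :: 'a and p :: real
    and \<alpha>s :: "nat \<Rightarrow> nat \<Rightarrow> 'a" and \<alpha> :: "nat \<Rightarrow> 'a" and n0 :: nat
  assumes "infinite A" and "z \<in> A" and "p \<ge> 1"
    and "\<forall>n\<ge>1. inN A (\<alpha>s n)"
    and "n0 \<ge> 2" and "a \<in> A" and "b \<in> A" and "a \<noteq> b"
    and "inN A \<alpha>" and "\<alpha> n0 = a" and "\<forall>k>n0. \<alpha> k = b"
    and "(\<lambda>n. lp_norm p (A - {z}) (\<lambda>c. pp A z (\<alpha>s n) c - pp A z \<alpha> c)) \<longlonglongrightarrow> 0"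
  shows "\<forall>m. m > n0 + 1 \<longrightarrow> (\<exists>lm\<ge>1. \<forall>l\<ge>lm.
      ((\<forall>i\<in>{1..<n0}. \<alpha>s l i = \<alpha> i) \<and> \<alpha>s l n0 = a \<and> (\<forall>i\<in>{n0<..m}. \<alpha>s l i = b))
    \<or> ((\<forall>i\<in>{1..<n0}. \<alpha>s l i = \<alpha> i) \<and> \<alpha>s l n0 = b \<and> (\<forall>i\<in>{n0<..m}. \<alpha>s l i = a)))"
proof (intro allI impI)
  fix m assume m: "m > n0 + 1"
  obtain N where N: "\<And>l. l \<ge> N \<Longrightarrow>
      lp_norm p (A - {z}) (\<lambda>c. pp A z (\<alpha>s l) c - pp A z \<alpha> c) < (1/2)^(m+2)"
    using order_tendstoD(2)[OF assms(12), of "(1/2)^(m+2)"] by (auto simp: eventually_sequentially)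
  have close: "\<forall>e\<in>A - {z}. \<bar>tail_weight (\<alpha>s l) e 1 - tail_weight \<alpha> e 1\<bar> < (1/2)^(m+2)"
    if "l \<ge> N" for l
    using tail_weight_close_of_lp_norm_less[OF \<open>p \<ge> 1\<close> N[OF that]] by blast
  show "\<exists>lm\<ge>1. \<forall>l\<ge>lm.
      ((\<forall>i\<in>{1..<n0}. \<alpha>s l i = \<alpha> i) \<and> \<alpha>s l n0 = a \<and> (\<forall>i\<in>{n0<..m}. \<alpha>s l i = b))
    \<or> ((\<forall>i\<in>{1..<n0}. \<alpha>s l i = \<alpha> i) \<and> \<alpha>s l n0 = b \<and> (\<forall>i\<in>{n0<..m}. \<alpha>s l i = a))"
    using close_tail_weights_agree_or_swap[OF assms(9) _ assms(10,11,8) _ m close] assms(4,5)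
    by (intro exI[of _ "max 1 N"]) simp
qed

end
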